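(* Let $n \geq 1$, $i \in \mathbb{Z}_{\geq 1}$ and $B \subseteq [n]$. Then $\mathrm{Cons}(V_B, i) = \mathrm{Gov}(V_B, i)$.
   Context: $V_{[n]} = \mathbb{F}_2^n$ with basis $e_1,\dots,e_n$ and dual basis $\chi_1,\dots,\chi_n$. For $C \subseteq [n]$ and $i \geq 1$, $\widetilde{\mathrm{Multi}}(V_C, i)$ is the span (inside the space of multilinear maps $V_{[n]}^i \to \mathbb{F}_2$) of $\chi_{\tau(1)}\otimes\cdots\otimes\chi_{\tau(i)}$ over injective maps $\tau: \{1,\dots,i\} \to C$, where $(\chi_{h_1}\otimes\cdots\otimes\chi_{h_i})(\sigma_1,\dots,\sigma_i) = \prod_s\chi_{h_s}(\sigma_s)$. For $b \in \widetilde{\mathrm{Multi}}(V_C,i)$ and $j \in C$, $b(e_j, -)$ lies in $\widetilde{\mathrm{Multi}}(V_{C\setminus\{j\}}, i-1)$. Consistent tensors $\mathrm{Cons}(V_C, i) \subseteq \widetilde{\mathrm{Multi}}(V_C,i)$ are defined recursively: $\mathrm{Cons}(V_C,1)$ is the span of $\{\chi_x : x \in C\}$; $\mathrm{Cons}(V_C,2)$ consists of the $b$ with $b(\sigma_1,\sigma_2) = b(\sigma_2,\sigma_1)$ for all $\sigma_1,\sigma_2$; $\mathrm{Cons}(V_C,3)$ consists of the $b$ such that $b(e_j,-) \in \mathrm{Cons}(V_{C\setminus\{j\}},2)$ for all $j \in C$ and $b(\sigma_1,\sigma_2,\sigma_3)+b(\sigma_3,\sigma_1,\sigma_2)+b(\sigma_2,\sigma_3,\sigma_1)=0$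 for all $\sigma_1,\sigma_2,\sigma_3 \in \{e_1,\dots,e_n\}$; for $i \geq 4$, $\mathrm{Cons}(V_C,i)$ consists of the $b$ such that $b(e_j,-) \in \mathrm{Cons}(V_{C\setminus\{j\}}, i-1)$ for all $j \in C$ and $b(e_{j_1}, e_{j_2}, -) = b(e_{j_2}, e_{j_1}, -)$ for all distinct $j_1, j_2 \in C$. Governing tensors: for $A \subseteq [n]$ with $\#A = i \geq 2$ and $x \in A$, $\phi_{(A,x)} = \sum_\tau \chi_{\tau(1)}\otimes\cdots\otimes\chi_{\tau(i)}$ over bijections $\tau:\{1,\dots,i\}\to A$ with $\tau(i-1)=x$ or $\tau(i)=x$; for $A=\{x\}$, $\phi_{(A,x)} = \chi_x$. $\mathrm{Gov}(V_C, i)$ is the span of $\phi_{(A,x)}$ over $A \subseteq C$ with $\#A = i$ and $x \in A$. *)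

theory Defs
  imports Main "HOL-Library.Z2"
begin

text \<open>Vectors of V_[n] = F_2^n are functions nat => bit supported on {1..n}.
  A multilinear map V_[n]^i -> F_2 is a function on lists of vectors (of length i).\<close>

type_synonym vec = "nat \<Rightarrow> bit"
type_synonym mmap = "vec list \<Rightarrow> bit"

definition Vn :: "nat \<Rightarrow> vec set" where
  "Vn n = {\<sigma>. \<forall>k. k \<notin> {1..n} \<longrightarrow> \<sigma> k = 0}"

definition ebasis :: "nat \<Rightarrow> vec" where
  "ebasis j = (\<lambda>k. if k = j then 1 else 0)"

definition chi_tensor :: "nat list \<Rightarrow> mmap" where
  "chi_tensor hs = (\<lambda>\<sigma>s. \<Prod>s<length hs. (\<sigma>s ! s) (hs ! s))"

definition F2span :: "mmap set \<Rightarrow> mmap set" where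
  "F2span G = {(\<lambda>\<sigma>s. \<Sum>t\<in>S. t \<sigma>s) | S. finite S \<and> S \<subseteq> G}"

text \<open>tau : {1..i} -> C injective, represented by the list [tau 1, ..., tau i].\<close>
definition MultiT :: "nat set \<Rightarrow> nat \<Rightarrow> mmap set" where
  "MultiT C i = F2span {chi_tensor hs | hs. length hs = i \<and> distinct hs \<and> set hs \<subseteq> C}"

definition papp :: "mmap \<Rightarrow> nat \<Rightarrow> mmap" where
  "papp b j = (\<lambda>\<sigma>s. b (ebasis j # \<sigma>s))"

fun ConsT :: "nat \<Rightarrow> nat set \<Rightarrow> nat \<Rightarrow> mmap set" where
  "ConsT n C 0 = {}"
| "ConsT n C (Suc 0) = F2span {chi_tensor [x] | x. x \<in> C}"
| "ConsT n C (Suc (Suc 0)) = {b \<in> MultiT C 2.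
     \<forall>\<sigma>1 \<in> Vn n. \<forall>\<sigma>2 \<in> Vn n. b [\<sigma>1, \<sigma>2] = b [\<sigma>2, \<sigma>1]}"
| "ConsT n C (Suc (Suc (Suc 0))) = {b \<in> MultiT C 3.
     (\<forall>j \<in> C. papp b j \<in> ConsT n (C - {j}) 2) \<and>
     (\<forall>\<sigma>1 \<in> ebasis ` {1..n}. \<forall>\<sigma>2 \<in> ebasis ` {1..n}. \<forall>\<sigma>3 \<in> ebasis ` {1..n}.
        b [\<sigma>1, \<sigma>2, \<sigma>3] + b [\<sigma>3, \<sigma>1, \<sigma>2] + b [\<sigma>2, \<sigma>3, \<sigma>1] = 0)}"
| "ConsT n C (Suc (Suc (Suc (Suc k)))) = {b \<in> MultiT C (Suc (Suc (Suc (Suc k)))).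
     (\<forall>j \<in> C. papp b j \<in> ConsT n (C - {j}) (Suc (Suc (Suc k)))) \<and>
     (\<forall>j1 \<in> C. \<forall>j2 \<in> C. j1 \<noteq> j2 \<longrightarrow> papp (papp b j1) j2 = papp (papp b j2) j1)}"

text \<open>phi_(A,x): sum over bijections tau : {1..i} -> A (lists hs) with
  tau(i-1) = x or tau(i) = x (0-based positions i-2, i-1); phi_({x},x) = chi_x.\<close>
definition phi :: "nat set \<Rightarrow> nat \<Rightarrow> mmap" where
  "phi A x = (if card A = 1 then chi_tensor [x] else
     (\<lambda>\<sigma>s. \<Sum>hs \<in> {hs. distinct hs \<and> set hs = A \<and>
        (hs ! (card A - 2) = x \<or> hs ! (card A - 1) = x)}. chi_tensor hs \<sigma>s))"

definition Gov :: "nat set \<Rightarrow> nat \<Rightarrow> mmap set" where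
  "Gov C i = F2span {phi A x | A x. A \<subseteq> C \<and> card A = i \<and> x \<in> A}"

end

(*
  Expand a multilinear map b in the basis chi_w, w running over the injective words of
  length i in B; its coefficients are c w = b(e_{w_1}, ..., e_{w_i}).  In these coordinates
  the recursive conditions defining Cons say exactly that c w depends only on the set of
  letters of w and the set of its last two letters, and that
  c(u x y z) + c(u z x y) + c(u y z x) = 0.
  The coefficient of phi_(A,x) at w is 1 iff w has letter set A and x is one of its last
  two letters, and these coefficients satisfy both conditions.  Conversely, given such a c,
  let a = min A and let h(A,t) be the value of c on words with letter set A ending in
  {a, t}, with h(A,a) = 0.  If w ends in y z with a not among them, moving a to the
  third-to-last place and applying the cyclic relation gives c w = h(A,y) + h(A,z); the
  same holds trivially if a is y or z.  Hence b is the sum of the h(A,x) phi_(A,x).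
*)

theory Submission
  imports Defs
begin

section \<open>Linear spans over the two-element field\<close>

declare add_bit_eq_xor [simp del] mult_bit_eq_and [simp del]

lemma bit_add_self [simp]: "(x::bit) + x = 0"
  by (cases x) simp_all

lemma bit_add3_eq_0_iff: "(x::bit) + y + z = 0 \<longleftrightarrow> x = y + z"
  by (cases x; cases y; cases z) simp_all

lemma F2span_zero: "(\<lambda>\<sigma>s. 0) \<in> F2span G"
  unfolding F2span_def by (rule CollectI, rule exI[of _ "{}"]) simp

lemma F2span_base: "g \<in> G \<Longrightarrow> g \<in> F2span G"
  unfolding F2span_def by (rule CollectI, rule exI[of _ "{g}"]) simp

lemma sum_add_sum_eq_sum_sym_diff:
  fixes f :: "'a \<Rightarrow> bit"
  assumes "finite S" "finite T"
  shows "sum f S + sum f T = sum f ((S - T) \<union> (T - S))"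
proof -
  have "sum f S + sum f T = (sum f (S \<inter> T) + sum f (S \<inter> T)) + (sum f (S - T) + sum f (T - S))"
    using assms sum.Int_Diff[of S f T] sum.Int_Diff[of T f S] by (simp add: Int_commute ac_simps)
  also have "\<dots> = sum f ((S - T) \<union> (T - S))"
    using assms by (subst sum.union_disjoint) auto
  finally show ?thesis .
qed

lemma F2span_add:
  assumes "b1 \<in> F2span G" "b2 \<in> F2span G"
  shows "(\<lambda>\<sigma>s. b1 \<sigma>s + b2 \<sigma>s) \<in> F2span G"
proof -
  obtain S T where S: "finite S" "S \<subseteq> G" "b1 = (\<lambda>\<sigma>s. \<Sum>t\<in>S. t \<sigma>s)"
    and T: "finite T" "T \<subseteq> G" "b2 = (\<lambda>\<sigma>s. \<Sum>t\<in>T. t \<sigma>s)"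
    using assms unfolding F2span_def by blast
  have "(\<lambda>\<sigma>s. b1 \<sigma>s + b2 \<sigma>s) = (\<lambda>\<sigma>s. \<Sum>t\<in>(S - T) \<union> (T - S). t \<sigma>s)"
    using S T by (simp add: sum_add_sum_eq_sum_sym_diff)
  moreover have "finite ((S - T) \<union> (T - S))" "(S - T) \<union> (T - S) \<subseteq> G"
    using S T by auto
  ultimately show ?thesis
    unfolding F2span_def by blast
qed

lemma F2span_sum:
  assumes "finite I" "\<And>p. p \<in> I \<Longrightarrow> f p \<in> F2span G"
  shows "(\<lambda>\<sigma>s. \<Sum>p\<in>I. a p * f p \<sigma>s) \<in> F2span G"
  using assms
proof (induction I rule: finite_induct)
  case empty
  then show ?case by (simp add: F2span_zero)
next
  case (insert p I)
  then have IH: "(\<lambda>\<sigma>s. \<Sum>p\<in>I. a p * f p \<sigma>s) \<in> F2span G"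
    by simp
  show ?case
  proof (cases "a p = 0")
    case True
    then show ?thesis using insert IH by simp
  next
    case False
    then show ?thesis
      using insert F2span_add[OF _ IH, of "f p"] by simp
  qed
qed

lemma F2span_minimal:
  assumes "(\<lambda>\<sigma>s. 0) \<in> V"
    and "\<And>b1 b2. b1 \<in> V \<Longrightarrow> b2 \<in> V \<Longrightarrow> (\<lambda>\<sigma>s. b1 \<sigma>s + b2 \<sigma>s) \<in> V"
    and "G \<subseteq> V"
  shows "F2span G \<subseteq> V"
proof
  fix b assume "b \<in> F2span G"
  then obtain S where S: "finite S" "S \<subseteq> G" "b = (\<lambda>\<sigma>s. \<Sum>t\<in>S. t \<sigma>s)"
    unfolding F2span_def by blast
  from S(1,2) have "(\<lambda>\<sigma>s. \<Sum>t\<in>S. t \<sigma>s) \<in> V"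
  proof (induction S rule: finite_induct)
    case (insert t S)
    then show ?case using assms(2)[of t] assms(3) by auto
  qed (use assms(1) in simp)
  then show "b \<in> V" using S(3) by simp
qed

section \<open>Coordinates in the basis of injective words\<close>

definition inj_words :: "nat set \<Rightarrow> nat \<Rightarrow> nat list set" where
  "inj_words C k = {w. length w = k \<and> distinct w \<and> set w \<subseteq> C}"

definition coeff :: "mmap \<Rightarrow> nat list \<Rightarrow> bit" where
  "coeff b w = b (map ebasis w)"

definition tensor_of :: "nat set \<Rightarrow> nat \<Rightarrow> (nat list \<Rightarrow> bit) \<Rightarrow> mmap" where
  "tensor_of C k c = (\<lambda>\<sigma>s. \<Sum>w\<in>inj_words C k. c w * chi_tensor w \<sigma>s)"

lemma finite_inj_words: "finite C \<Longrightarrow> finite (inj_words C k)"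
  by (rule finite_subset[OF _ finite_lists_length_eq[of C k]]) (auto simp: inj_words_def)

lemma Cons_in_inj_words_iff:
  "j # w \<in> inj_words C (Suc k) \<longleftrightarrow> j \<in> C \<and> w \<in> inj_words (C - {j}) k"
  by (auto simp: inj_words_def)

lemma inj_words_rotate:
  "u @ [x, y, z] \<in> inj_words C k \<Longrightarrow> u @ [z, x, y] \<in> inj_words C k \<and> u @ [y, z, x] \<in> inj_words C k"
  by (auto simp: inj_words_def)

lemma chi_tensor_Nil [simp]: "chi_tensor [] \<sigma>s = 1"
  by (simp add: chi_tensor_def)

lemma chi_tensor_Cons [simp]: "chi_tensor (a # w) (\<sigma> # \<sigma>s) = \<sigma> a * chi_tensor w \<sigma>s"
  unfolding chi_tensor_def length_Cons prod.lessThan_Suc_shift by simp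

lemma chi_tensor_map_ebasis:
  "length v = length w \<Longrightarrow> chi_tensor v (map ebasis w) = (if v = w then 1 else 0)"
proof (induction v arbitrary: w)
  case (Cons a v)
  then obtain b u where "w = b # u" "length v = length u"
    by (cases w) auto
  with Cons.IH show ?case by (auto simp: ebasis_def)
qed simp

lemma coeff_tensor_of:
  assumes "finite C" "length w = k"
  shows "coeff (tensor_of C k c) w = (if w \<in> inj_words C k then c w else 0)"
proof -
  have "coeff (tensor_of C k c) w = (\<Sum>v\<in>inj_words C k. if v = w then c v else 0)"
    unfolding coeff_def tensor_of_def
    by (rule sum.cong) (auto simp: chi_tensor_map_ebasis assms(2) inj_words_def)
  then show ?thesis
    using finite_inj_words[OF assms(1)] by simp
qed

lemma tensor_of_in_MultiT:
  assumes "finite C"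
  shows "tensor_of C k c \<in> MultiT C k"
  unfolding tensor_of_def MultiT_def
  by (rule F2span_sum[OF finite_inj_words[OF assms]]) (auto simp: inj_words_def intro!: F2span_base)

lemma tensor_of_cong:
  "(\<And>w. w \<in> inj_words C k \<Longrightarrow> c w = d w) \<Longrightarrow> tensor_of C k c = tensor_of C k d"
  unfolding tensor_of_def by (intro ext sum.cong) auto

lemma coeff_add: "coeff (\<lambda>\<sigma>s. b1 \<sigma>s + b2 \<sigma>s) w = coeff b1 w + coeff b2 w"
  by (simp add: coeff_def)

lemma tensor_of_coeff:
  assumes "finite C" and "b \<in> MultiT C k"
  shows "tensor_of C k (coeff b) = b"
proof -
  have "MultiT C k \<subseteq> {b. tensor_of C k (coeff b) = b}"
    unfolding MultiT_def
  proof (rule F2span_minimal)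
    show "(\<lambda>\<sigma>s. 0) \<in> {b. tensor_of C k (coeff b) = b}"
      by (simp add: tensor_of_def coeff_def)
  next
    fix b1 b2 assume "b1 \<in> {b. tensor_of C k (coeff b) = b}" "b2 \<in> {b. tensor_of C k (coeff b) = b}"
    moreover have "tensor_of C k (coeff (\<lambda>\<sigma>s. b1 \<sigma>s + b2 \<sigma>s)) =
        (\<lambda>\<sigma>s. tensor_of C k (coeff b1) \<sigma>s + tensor_of C k (coeff b2) \<sigma>s)"
      by (simp add: tensor_of_def coeff_add distrib_right sum.distrib)
    ultimately show "(\<lambda>\<sigma>s. b1 \<sigma>s + b2 \<sigma>s) \<in> {b. tensor_of C k (coeff b) = b}"
      by simp
  next
    have "tensor_of C k (coeff (chi_tensor v)) = chi_tensor v" if "v \<in> inj_words C k" for v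
    proof -
      have "tensor_of C k (coeff (chi_tensor v)) =
          (\<lambda>\<sigma>s. \<Sum>w\<in>inj_words C k. if v = w then chi_tensor w \<sigma>s else 0)"
        unfolding tensor_of_def coeff_def
        by (intro ext sum.cong) (use that in \<open>auto simp: chi_tensor_map_ebasis inj_words_def\<close>)
      then show ?thesis
        using that finite_inj_words[OF assms(1)] by simp
    qed
    then show "{chi_tensor hs |hs. length hs = k \<and> distinct hs \<and> set hs \<subseteq> C} \<subseteq>
        {b. tensor_of C k (coeff b) = b}"
      by (auto simp: inj_words_def)
  qed
  then show ?thesis using assms(2) by blast
qed

lemma coeff_eq_0_outside:
  "finite C \<Longrightarrow> b \<in> MultiT C k \<Longrightarrow> length w = k \<Longrightarrow> w \<notin> inj_words C k \<Longrightarrow> coeff b w = 0"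
  by (metis tensor_of_coeff coeff_tensor_of)

lemma coeff_papp: "coeff (papp b j) = (\<lambda>w. coeff b (j # w))"
  by (simp add: coeff_def papp_def fun_eq_iff)

lemma papp_tensor_of:
  assumes "finite C" and "j \<in> C"
  shows "papp (tensor_of C (Suc k) c) j = tensor_of (C - {j}) k (\<lambda>w. c (j # w))"
proof
  fix \<sigma>s
  have sub: "(#) j ` inj_words (C - {j}) k \<subseteq> inj_words C (Suc k)"
    using assms(2) by (auto simp: Cons_in_inj_words_iff)
  have "papp (tensor_of C (Suc k) c) j \<sigma>s =
      (\<Sum>w\<in>inj_words C (Suc k). c w * chi_tensor w (ebasis j # \<sigma>s))"
    by (simp add: papp_def tensor_of_def)
  also have "\<dots> = (\<Sum>w\<in>(#) j ` inj_words (C - {j}) k. c w * chi_tensor w (ebasis j # \<sigma>s))"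
  proof (rule sum.mono_neutral_right[OF finite_inj_words[OF assms(1)] sub], rule ballI)
    fix w assume w: "w \<in> inj_words C (Suc k) - (#) j ` inj_words (C - {j}) k"
    then obtain a v where "w = a # v" "a \<noteq> j"
      by (cases w) (auto simp: inj_words_def Cons_in_inj_words_iff)
    then show "c w * chi_tensor w (ebasis j # \<sigma>s) = 0"
      by (simp add: ebasis_def)
  qed
  also have "\<dots> = (\<Sum>v\<in>inj_words (C - {j}) k. c (j # v) * chi_tensor v \<sigma>s)"
    by (subst sum.reindex) (auto simp: ebasis_def)
  finally show "papp (tensor_of C (Suc k) c) j \<sigma>s = tensor_of (C - {j}) k (\<lambda>w. c (j # w)) \<sigma>s"
    by (simp add: tensor_of_def)
qed

lemma papp_MultiT:
  "finite C \<Longrightarrow> j \<in> C \<Longrightarrow> b \<in> MultiT C (Suc k) \<Longrightarrow> papp b j \<in> MultiT (C - {j}) k"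
  by (metis tensor_of_coeff papp_tensor_of tensor_of_in_MultiT finite_Diff)

section \<open>Consistent coefficient functions\<close>

definition last_two :: "nat list \<Rightarrow> nat set" where
  "last_two w = set (drop (length w - 2) w)"

lemma last_two_snoc2 [simp]: "last_two (p @ [y, z]) = {y, z}"
  by (simp add: last_two_def)

lemma last_two_snoc3 [simp]: "last_two (u @ [x, y, z]) = {y, z}"
  using last_two_snoc2[of "u @ [x]" y z] by simp

lemma last_two_subset: "last_two w \<subseteq> set w"
  by (auto simp: last_two_def dest: in_set_dropD)

lemma last_two_short: "length w \<le> 2 \<Longrightarrow> last_two w = set w"
  by (simp add: last_two_def)

lemma snoc2_cases:
  assumes "2 \<le> length w"
  obtains p y z where "w = p @ [y, z]"
proof -
  obtain q z where "w = q @ [z]"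
    using assms by (cases w rule: rev_cases) auto
  moreover obtain p y where "q = p @ [y]"
    using assms \<open>w = q @ [z]\<close> by (cases q rule: rev_cases) auto
  ultimately show thesis
    using that by simp
qed

lemma last_two_Cons:
  assumes "2 \<le> length w"
  shows "last_two (j # w) = last_two w"
proof -
  obtain p y z where "w = p @ [y, z]"
    using snoc2_cases[OF assms] .
  then show ?thesis
    using last_two_snoc2[of "j # p" y z] by simp
qed

lemma last_two_conv_nth:
  assumes "2 \<le> length w"
  shows "last_two w = {w ! (length w - 2), w ! (length w - 1)}"
proof -
  obtain p y z where "w = p @ [y, z]"
    using snoc2_cases[OF assms] .
  then show ?thesis
    by (simp add: nth_append)
qed

lemma last_two_remove1: "a \<notin> last_two u \<Longrightarrow> last_two (remove1 a u) = last_two u"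
proof (cases "2 \<le> length u")
  case True
  then obtain p y z where "u = p @ [y, z]"
    by (rule snoc2_cases)
  moreover assume "a \<notin> last_two u"
  ultimately show ?thesis
    by (simp add: remove1_append)
next
  case False
  moreover assume "a \<notin> last_two u"
  ultimately show ?thesis
    by (simp add: last_two_short remove1_idem)
qed

definition consistent_coeffs :: "nat set \<Rightarrow> nat \<Rightarrow> (nat list \<Rightarrow> bit) \<Rightarrow> bool" where
  "consistent_coeffs C k c \<longleftrightarrow>
     (\<forall>w\<in>inj_words C k. \<forall>w'\<in>inj_words C k.
        set w = set w' \<longrightarrow> last_two w = last_two w' \<longrightarrow> c w = c w') \<and>
     (\<forall>u x y z. u @ [x, y, z] \<in> inj_words C k \<longrightarrow>
        c (u @ [x, y, z]) + c (u @ [z, x, y]) + c (u @ [y, z, x]) = 0)"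

lemma consistent_coeffsI:
  assumes "\<And>w w'. w \<in> inj_words C k \<Longrightarrow> w' \<in> inj_words C k \<Longrightarrow>
      set w = set w' \<Longrightarrow> last_two w = last_two w' \<Longrightarrow> c w = c w'"
    and "\<And>u x y z. u @ [x, y, z] \<in> inj_words C k \<Longrightarrow>
      c (u @ [x, y, z]) + c (u @ [z, x, y]) + c (u @ [y, z, x]) = 0"
  shows "consistent_coeffs C k c"
  using assms unfolding consistent_coeffs_def by blast

lemma consistent_coeffs_last_two:
  "consistent_coeffs C k c \<Longrightarrow> w \<in> inj_words C k \<Longrightarrow> w' \<in> inj_words C k \<Longrightarrow>
    set w = set w' \<Longrightarrow> last_two w = last_two w' \<Longrightarrow> c w = c w'"
  unfolding consistent_coeffs_def by blast

lemma consistent_coeffs_cyclic: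
  "consistent_coeffs C k c \<Longrightarrow> u @ [x, y, z] \<in> inj_words C k \<Longrightarrow>
    c (u @ [x, y, z]) + c (u @ [z, x, y]) + c (u @ [y, z, x]) = 0"
  unfolding consistent_coeffs_def by blast

lemma consistent_coeffs_2_iff:
  "consistent_coeffs C 2 c \<longleftrightarrow> (\<forall>y z. [y, z] \<in> inj_words C 2 \<longrightarrow> c [y, z] = c [z, y])"
proof (intro iffI allI impI)
  fix y z assume "consistent_coeffs C 2 c" "[y, z] \<in> inj_words C 2"
  moreover have "[z, y] \<in> inj_words C 2"
    using \<open>[y, z] \<in> inj_words C 2\<close> by (auto simp: inj_words_def)
  ultimately show "c [y, z] = c [z, y]"
    by (rule consistent_coeffs_last_two) (auto simp: last_two_short)
next
  assume sym: "\<forall>y z. [y, z] \<in> inj_words C 2 \<longrightarrow> c [y, z] = c [z, y]"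
  show "consistent_coeffs C 2 c"
  proof (rule consistent_coeffsI)
    fix w w' assume w: "w \<in> inj_words C 2" "w' \<in> inj_words C 2" "set w = set w'"
    then obtain y z y' z' where "w = [y, z]" "w' = [y', z']"
      by (auto simp: inj_words_def numeral_2_eq_2 length_Suc_conv)
    with w sym show "c w = c w'"
      by (auto simp: doubleton_eq_iff)
  qed (auto simp: inj_words_def)
qed

lemma consistent_coeffs_residual:
  assumes c: "consistent_coeffs C (Suc k) c" and "2 \<le> k" "j \<in> C"
  shows "consistent_coeffs (C - {j}) k (\<lambda>w. c (j # w))"
proof (rule consistent_coeffsI)
  fix w w' assume w: "w \<in> inj_words (C - {j}) k" "w' \<in> inj_words (C - {j}) k"
    "set w = set w'" "last_two w = last_two w'"
  have "j # w \<in> inj_words C (Suc k)" "j # w' \<in> inj_words C (Suc k)"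
    using w \<open>j \<in> C\<close> by (auto simp: Cons_in_inj_words_iff)
  moreover have "last_two (j # w) = last_two (j # w')"
    using w \<open>2 \<le> k\<close> by (auto simp: inj_words_def last_two_Cons)
  ultimately show "c (j # w) = c (j # w')"
    using consistent_coeffs_last_two[OF c] w(3) by (metis list.set(2))
next
  fix u x y z assume "u @ [x, y, z] \<in> inj_words (C - {j}) k"
  then have "(j # u) @ [x, y, z] \<in> inj_words C (Suc k)"
    using \<open>j \<in> C\<close> by (simp add: Cons_in_inj_words_iff)
  from consistent_coeffs_cyclic[OF c this]
  show "c (j # u @ [x, y, z]) + c (j # u @ [z, x, y]) + c (j # u @ [y, z, x]) = 0"
    by simp
qed

lemma consistent_coeffs_SucI:
  assumes "2 \<le> k"
    and residual: "\<And>j. j \<in> C \<Longrightarrow> consistent_coeffs (C - {j}) k (\<lambda>w. c (j # w))"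
    and swap: "\<And>j1 j2 r. j1 # j2 # r \<in> inj_words C (Suc k) \<Longrightarrow> 2 \<le> length r \<Longrightarrow>
      c (j1 # j2 # r) = c (j2 # j1 # r)"
    and cyclic: "\<And>x y z. [x, y, z] \<in> inj_words C (Suc k) \<Longrightarrow>
      c [x, y, z] + c [z, x, y] + c [y, z, x] = 0"
  shows "consistent_coeffs C (Suc k) c"
proof (rule consistent_coeffsI)
  fix w w' assume w: "w \<in> inj_words C (Suc k)" "w' \<in> inj_words C (Suc k)"
    "set w = set w'" "last_two w = last_two w'"
  obtain j u where wu: "w = j # u"
    using w(1) by (cases w) (auto simp: inj_words_def)
  obtain j' u' where wu': "w' = j' # u'"
    using w(2) by (cases w') (auto simp: inj_words_def)
  have u: "j \<in> C" "u \<in> inj_words (C - {j}) k" and u': "j' \<in> C" "u' \<in> inj_words (C - {j'}) k"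
    using w(1,2) by (simp_all add: wu wu' Cons_in_inj_words_iff)
  then have len: "length u = k" "length u' = k"
    by (simp_all add: inj_words_def)
  have last_u: "last_two u = last_two u'"
    using w(4) len \<open>2 \<le> k\<close> by (simp add: wu wu' last_two_Cons)
  show "c w = c w'"
  proof (cases "j = j'")
    case True
    then have "set u = set u'"
      using w(3) u u' by (auto simp: wu wu' inj_words_def)
    then show ?thesis
      using consistent_coeffs_last_two[OF residual[OF u(1)] u(2)] u'(2) last_u True
      by (simp add: wu wu')
  next
    case False
    \<comment> \<open>Move \<open>j'\<close> to the front of \<open>u\<close>, swap it with \<open>j\<close>, and compare with \<open>u'\<close>.\<close>
    have j'_u: "j' \<in> set u" "j' \<notin> last_two u"
      using w(3) False u'(2) last_u last_two_subset[of u']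
      by (auto simp: wu wu' inj_words_def)
    have "3 \<le> k"
      using j'_u len \<open>2 \<le> k\<close> last_two_short[of u] by fastforce
    define r where "r = remove1 j' u"
    have r: "set r = set u - {j'}" "length r = k - 1" "last_two r = last_two u"
      using u(2) j'_u len by (simp_all add: r_def inj_words_def length_remove1 last_two_remove1)
    have r_words: "j' # r \<in> inj_words (C - {j}) k" "j # r \<in> inj_words (C - {j'}) k"
      using u u' r j'_u False \<open>3 \<le> k\<close> by (auto simp: r_def inj_words_def)
    have "c (j # u) = c (j # j' # r)"
      using consistent_coeffs_last_two[OF residual[OF u(1)] u(2) r_words(1)] j'_u r \<open>3 \<le> k\<close>
      by (auto simp: last_two_Cons)
    also have "\<dots> = c (j' # j # r)"
      using swap r_words(1) u(1) r(2) \<open>3 \<le> k\<close> by (simp add: Cons_in_inj_words_iff)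
    also have "\<dots> = c (j' # u')"
    proof (rule consistent_coeffs_last_two[OF residual[OF u'(1)] r_words(2) u'(2)])
      show "set (j # r) = set u'"
        using w(3) r u u' False by (auto simp: wu wu' inj_words_def)
      show "last_two (j # r) = last_two u'"
        using r last_u \<open>3 \<le> k\<close> by (simp add: last_two_Cons)
    qed
    finally show ?thesis
      by (simp add: wu wu')
  qed
next
  fix u x y z assume "u @ [x, y, z] \<in> inj_words C (Suc k)"
  then show "c (u @ [x, y, z]) + c (u @ [z, x, y]) + c (u @ [y, z, x]) = 0"
  proof (cases u)
    case (Cons j v)
    with \<open>u @ [x, y, z] \<in> inj_words C (Suc k)\<close>
    have "j \<in> C" "v @ [x, y, z] \<in> inj_words (C - {j}) k"
      by (simp_all add: Cons_in_inj_words_iff)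
    from consistent_coeffs_cyclic[OF residual[OF this(1)] this(2)] show ?thesis
      by (simp add: Cons)
  qed (simp add: cyclic)
qed

text \<open>For \<open>k = 2\<close> the swap condition is vacuous and for \<open>k \<ge> 3\<close> the cyclic one is; this matches
  the two shapes of the recursion defining \<open>ConsT\<close>.\<close>

lemma consistent_coeffs_Suc_iff:
  assumes "2 \<le> k"
  shows "consistent_coeffs C (Suc k) c \<longleftrightarrow>
    (\<forall>j\<in>C. consistent_coeffs (C - {j}) k (\<lambda>w. c (j # w))) \<and>
    (\<forall>j1 j2 r. j1 # j2 # r \<in> inj_words C (Suc k) \<longrightarrow> 2 \<le> length r \<longrightarrow>
       c (j1 # j2 # r) = c (j2 # j1 # r)) \<and>
    (\<forall>x y z. [x, y, z] \<in> inj_words C (Suc k) \<longrightarrow> c [x, y, z] + c [z, x, y] + c [y, z, x] = 0)"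
proof
  assume c: "consistent_coeffs C (Suc k) c"
  show "(\<forall>j\<in>C. consistent_coeffs (C - {j}) k (\<lambda>w. c (j # w))) \<and>
    (\<forall>j1 j2 r. j1 # j2 # r \<in> inj_words C (Suc k) \<longrightarrow> 2 \<le> length r \<longrightarrow>
       c (j1 # j2 # r) = c (j2 # j1 # r)) \<and>
    (\<forall>x y z. [x, y, z] \<in> inj_words C (Suc k) \<longrightarrow> c [x, y, z] + c [z, x, y] + c [y, z, x] = 0)"
  proof (intro conjI allI ballI impI)
    fix j assume "j \<in> C"
    then show "consistent_coeffs (C - {j}) k (\<lambda>w. c (j # w))"
      using consistent_coeffs_residual[OF c assms] by blast
  next
    fix j1 j2 r assume r: "j1 # j2 # r \<in> inj_words C (Suc k)" "2 \<le> length r"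
    show "c (j1 # j2 # r) = c (j2 # j1 # r)"
    proof (rule consistent_coeffs_last_two[OF c r(1)])
      show "j2 # j1 # r \<in> inj_words C (Suc k)"
        using r(1) by (auto simp: inj_words_def)
      show "last_two (j1 # j2 # r) = last_two (j2 # j1 # r)"
        using r(2) by (simp add: last_two_Cons)
    qed auto
  next
    fix x y z assume "[x, y, z] \<in> inj_words C (Suc k)"
    then show "c [x, y, z] + c [z, x, y] + c [y, z, x] = 0"
      using consistent_coeffs_cyclic[OF c, of "[]"] by simp
  qed
next
  assume "(\<forall>j\<in>C. consistent_coeffs (C - {j}) k (\<lambda>w. c (j # w))) \<and>
    (\<forall>j1 j2 r. j1 # j2 # r \<in> inj_words C (Suc k) \<longrightarrow> 2 \<le> length r \<longrightarrow>
       c (j1 # j2 # r) = c (j2 # j1 # r)) \<and>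
    (\<forall>x y z. [x, y, z] \<in> inj_words C (Suc k) \<longrightarrow> c [x, y, z] + c [z, x, y] + c [y, z, x] = 0)"
  then show "consistent_coeffs C (Suc k) c"
    by (intro consistent_coeffs_SucI[OF assms]) blast+
qed

definition consistent_tensors :: "nat set \<Rightarrow> nat \<Rightarrow> mmap set" where
  "consistent_tensors C k = {b \<in> MultiT C k. consistent_coeffs C k (coeff b)}"

lemma consistent_tensors_Suc_iff:
  assumes "finite C" "2 \<le> k" "b \<in> MultiT C (Suc k)"
  shows "b \<in> consistent_tensors C (Suc k) \<longleftrightarrow>
    (\<forall>j\<in>C. papp b j \<in> consistent_tensors (C - {j}) k) \<and>
    (\<forall>j1 j2 r. j1 # j2 # r \<in> inj_words C (Suc k) \<longrightarrow> 2 \<le> length r \<longrightarrow>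
       coeff b (j1 # j2 # r) = coeff b (j2 # j1 # r)) \<and>
    (\<forall>x y z. [x, y, z] \<in> inj_words C (Suc k) \<longrightarrow>
       coeff b [x, y, z] + coeff b [z, x, y] + coeff b [y, z, x] = 0)"
  using assms papp_MultiT[OF assms(1) _ assms(3)]
  by (simp add: consistent_tensors_def consistent_coeffs_Suc_iff coeff_papp)

lemma ebasis_in_Vn: "j \<in> {1..n} \<Longrightarrow> ebasis j \<in> Vn n"
  by (auto simp: Vn_def ebasis_def)

lemma ConsT_2: "ConsT n C 2 = {b \<in> MultiT C 2. \<forall>\<sigma>1\<in>Vn n. \<forall>\<sigma>2\<in>Vn n. b [\<sigma>1, \<sigma>2] = b [\<sigma>2, \<sigma>1]}"
  by (simp add: numeral_2_eq_2)

lemma ConsT_3: "ConsT n C 3 = {b \<in> MultiT C 3.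
     (\<forall>j\<in>C. papp b j \<in> ConsT n (C - {j}) 2) \<and>
     (\<forall>\<sigma>1\<in>ebasis ` {1..n}. \<forall>\<sigma>2\<in>ebasis ` {1..n}. \<forall>\<sigma>3\<in>ebasis ` {1..n}.
        b [\<sigma>1, \<sigma>2, \<sigma>3] + b [\<sigma>3, \<sigma>1, \<sigma>2] + b [\<sigma>2, \<sigma>3, \<sigma>1] = 0)}"
  by (simp add: numeral_3_eq_3 numeral_2_eq_2)

lemma symmetric_iff_consistent_coeffs:
  assumes "C \<subseteq> {1..n}" "b \<in> MultiT C 2"
  shows "(\<forall>\<sigma>1\<in>Vn n. \<forall>\<sigma>2\<in>Vn n. b [\<sigma>1, \<sigma>2] = b [\<sigma>2, \<sigma>1]) \<longleftrightarrow> consistent_coeffs C 2 (coeff b)"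
  unfolding consistent_coeffs_2_iff
proof (intro iffI allI impI ballI)
  fix y z assume sym: "\<forall>\<sigma>1\<in>Vn n. \<forall>\<sigma>2\<in>Vn n. b [\<sigma>1, \<sigma>2] = b [\<sigma>2, \<sigma>1]"
    and "[y, z] \<in> inj_words C 2"
  then have "ebasis y \<in> Vn n" "ebasis z \<in> Vn n"
    using assms(1) by (auto simp: inj_words_def intro!: ebasis_in_Vn)
  with sym show "coeff b [y, z] = coeff b [z, y]"
    by (simp add: coeff_def)
next
  fix \<sigma>1 \<sigma>2
  assume sym: "\<forall>y z. [y, z] \<in> inj_words C 2 \<longrightarrow> coeff b [y, z] = coeff b [z, y]"
  have fin: "finite C"
    using assms(1) finite_subset by blast
  have expand: "b \<sigma>s = (\<Sum>w\<in>inj_words C 2. coeff b w * chi_tensor w \<sigma>s)" for \<sigma>s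
    using tensor_of_coeff[OF fin assms(2)] by (metis tensor_of_def)
  have "(\<Sum>w\<in>inj_words C 2. coeff b w * chi_tensor w [\<sigma>2, \<sigma>1]) =
      (\<Sum>w\<in>inj_words C 2. coeff b w * chi_tensor w [\<sigma>1, \<sigma>2])"
  proof (rule sum.reindex_bij_witness[of _ rev rev])
    fix w assume w: "w \<in> inj_words C 2"
    then obtain y z where "w = [y, z]"
      by (auto simp: inj_words_def numeral_2_eq_2 length_Suc_conv)
    moreover have "coeff b [z, y] = coeff b [y, z]"
      using w sym \<open>w = [y, z]\<close> by metis
    ultimately show "coeff b (rev w) * chi_tensor (rev w) [\<sigma>1, \<sigma>2] = coeff b w * chi_tensor w [\<sigma>2, \<sigma>1]"
      by (simp add: mult.commute)
  qed (auto simp: inj_words_def)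
  then show "b [\<sigma>1, \<sigma>2] = b [\<sigma>2, \<sigma>1]"
    by (simp add: expand)
qed

lemma ConsT_2_eq:
  assumes "C \<subseteq> {1..n}"
  shows "ConsT n C 2 = consistent_tensors C 2"
  unfolding ConsT_2 consistent_tensors_def using symmetric_iff_consistent_coeffs[OF assms] by blast

lemma basis_cyclic_iff_coeff:
  assumes "C \<subseteq> {1..n}" "b \<in> MultiT C 3"
  shows "(\<forall>\<sigma>1\<in>ebasis ` {1..n}. \<forall>\<sigma>2\<in>ebasis ` {1..n}. \<forall>\<sigma>3\<in>ebasis ` {1..n}.
        b [\<sigma>1, \<sigma>2, \<sigma>3] + b [\<sigma>3, \<sigma>1, \<sigma>2] + b [\<sigma>2, \<sigma>3, \<sigma>1] = 0) \<longleftrightarrow>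
     (\<forall>x y z. [x, y, z] \<in> inj_words C 3 \<longrightarrow>
        coeff b [x, y, z] + coeff b [z, x, y] + coeff b [y, z, x] = 0)"
proof (intro iffI allI impI ballI)
  fix x y z
  assume "\<forall>\<sigma>1\<in>ebasis ` {1..n}. \<forall>\<sigma>2\<in>ebasis ` {1..n}. \<forall>\<sigma>3\<in>ebasis ` {1..n}.
      b [\<sigma>1, \<sigma>2, \<sigma>3] + b [\<sigma>3, \<sigma>1, \<sigma>2] + b [\<sigma>2, \<sigma>3, \<sigma>1] = 0"
    and "[x, y, z] \<in> inj_words C 3"
  with assms(1) show "coeff b [x, y, z] + coeff b [z, x, y] + coeff b [y, z, x] = 0"
    by (auto simp: coeff_def inj_words_def)
next
  fix \<sigma>1 \<sigma>2 \<sigma>3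
  assume cyc: "\<forall>x y z. [x, y, z] \<in> inj_words C 3 \<longrightarrow>
      coeff b [x, y, z] + coeff b [z, x, y] + coeff b [y, z, x] = 0"
    and "\<sigma>1 \<in> ebasis ` {1..n}" "\<sigma>2 \<in> ebasis ` {1..n}" "\<sigma>3 \<in> ebasis ` {1..n}"
  then obtain x y z where \<sigma>: "\<sigma>1 = ebasis x" "\<sigma>2 = ebasis y" "\<sigma>3 = ebasis z"
    by blast
  have fin: "finite C"
    using assms(1) finite_subset by blast
  show "b [\<sigma>1, \<sigma>2, \<sigma>3] + b [\<sigma>3, \<sigma>1, \<sigma>2] + b [\<sigma>2, \<sigma>3, \<sigma>1] = 0"
  proof (cases "[x, y, z] \<in> inj_words C 3")
    case True
    then show ?thesis
      using cyc by (simp add: \<sigma> coeff_def)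
  next
    case False
    then have "[z, x, y] \<notin> inj_words C 3" "[y, z, x] \<notin> inj_words C 3"
      by (auto simp: inj_words_def)
    with False have "coeff b [x, y, z] = 0" "coeff b [z, x, y] = 0" "coeff b [y, z, x] = 0"
      using coeff_eq_0_outside[OF fin assms(2)] by simp_all
    then show ?thesis
      by (simp add: \<sigma> coeff_def)
  qed
qed

lemma papp_commute_iff_coeff:
  assumes "finite C" "b \<in> MultiT C (Suc (Suc m))"
  shows "(\<forall>j1\<in>C. \<forall>j2\<in>C. j1 \<noteq> j2 \<longrightarrow> papp (papp b j1) j2 = papp (papp b j2) j1) \<longleftrightarrow>
    (\<forall>j1 j2 r. j1 # j2 # r \<in> inj_words C (Suc (Suc m)) \<longrightarrow>
       coeff b (j1 # j2 # r) = coeff b (j2 # j1 # r))"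
proof (intro iffI allI impI ballI)
  fix j1 j2 r
  assume "\<forall>j1\<in>C. \<forall>j2\<in>C. j1 \<noteq> j2 \<longrightarrow> papp (papp b j1) j2 = papp (papp b j2) j1"
    and "j1 # j2 # r \<in> inj_words C (Suc (Suc m))"
  then have "papp (papp b j1) j2 (map ebasis r) = papp (papp b j2) j1 (map ebasis r)"
    by (auto simp: inj_words_def)
  then show "coeff b (j1 # j2 # r) = coeff b (j2 # j1 # r)"
    by (simp add: coeff_def papp_def)
next
  fix j1 j2
  assume swap: "\<forall>j1 j2 r. j1 # j2 # r \<in> inj_words C (Suc (Suc m)) \<longrightarrow>
      coeff b (j1 # j2 # r) = coeff b (j2 # j1 # r)"
    and j: "j1 \<in> C" "j2 \<in> C" "j1 \<noteq> j2"
  have papp2: "papp (papp b j) j' = tensor_of (C - {j} - {j'}) m (\<lambda>r. coeff b (j # j' # r))"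
    if "j \<in> C" "j' \<in> C" "j \<noteq> j'" for j j'
    using that assms
    by (subst tensor_of_coeff[OF assms, symmetric]) (simp add: papp_tensor_of)
  have residual_set: "C - {j1} - {j2} = C - {j2} - {j1}"
    by auto
  show "papp (papp b j1) j2 = papp (papp b j2) j1"
    unfolding papp2[OF j] papp2[OF j(2,1) j(3)[symmetric]] residual_set
    by (intro tensor_of_cong) (use swap j in \<open>auto simp: inj_words_def\<close>)
qed

lemma ConsT_3_eq:
  assumes "C \<subseteq> {1..n}"
  shows "ConsT n C 3 = consistent_tensors C 3"
proof (rule set_eqI)
  fix b
  have fin: "finite C"
    using assms finite_subset by blast
  have ConsT_2_residual: "ConsT n (C - {j}) 2 = consistent_tensors (C - {j}) 2" for j
    using assms by (intro ConsT_2_eq) auto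
  show "b \<in> ConsT n C 3 \<longleftrightarrow> b \<in> consistent_tensors C 3"
  proof (cases "b \<in> MultiT C 3")
    case True
    have no_swap: "\<not> 2 \<le> length r" if "j1 # j2 # r \<in> inj_words C 3" for j1 j2 r
      using that by (simp add: inj_words_def)
    have "b \<in> ConsT n C 3 \<longleftrightarrow> (\<forall>j\<in>C. papp b j \<in> consistent_tensors (C - {j}) 2) \<and>
        (\<forall>\<sigma>1\<in>ebasis ` {1..n}. \<forall>\<sigma>2\<in>ebasis ` {1..n}. \<forall>\<sigma>3\<in>ebasis ` {1..n}.
          b [\<sigma>1, \<sigma>2, \<sigma>3] + b [\<sigma>3, \<sigma>1, \<sigma>2] + b [\<sigma>2, \<sigma>3, \<sigma>1] = 0)"
      using True by (simp add: ConsT_3 ConsT_2_residual)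
    also have "\<dots> \<longleftrightarrow> (\<forall>j\<in>C. papp b j \<in> consistent_tensors (C - {j}) 2) \<and>
        (\<forall>x y z. [x, y, z] \<in> inj_words C 3 \<longrightarrow>
          coeff b [x, y, z] + coeff b [z, x, y] + coeff b [y, z, x] = 0)"
      using basis_cyclic_iff_coeff[OF assms True] by simp
    also have "\<dots> \<longleftrightarrow> b \<in> consistent_tensors C 3"
      using consistent_tensors_Suc_iff[OF fin order_refl, of b] True no_swap
      by (simp add: numeral_3_eq_3)
    finally show ?thesis .
  qed (simp add: ConsT_3 consistent_tensors_def)
qed

lemma ConsT_Suc_eq:
  assumes "C \<subseteq> {1..n}"
    and IH: "\<And>C'. C' \<subseteq> {1..n} \<Longrightarrow>
      ConsT n C' (Suc (Suc (Suc m))) = consistent_tensors C' (Suc (Suc (Suc m)))"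
  shows "ConsT n C (Suc (Suc (Suc (Suc m)))) = consistent_tensors C (Suc (Suc (Suc (Suc m))))"
proof (rule set_eqI)
  fix b
  let ?k = "Suc (Suc (Suc m))"
  have fin: "finite C"
    using assms(1) finite_subset by blast
  have IH_residual: "ConsT n (C - {j}) ?k = consistent_tensors (C - {j}) ?k" for j
    using assms(1) by (intro IH) auto
  show "b \<in> ConsT n C (Suc ?k) \<longleftrightarrow> b \<in> consistent_tensors C (Suc ?k)"
  proof (cases "b \<in> MultiT C (Suc ?k)")
    case True
    have long: "2 \<le> length r" if "j1 # j2 # r \<in> inj_words C (Suc ?k)" for j1 j2 r
      using that by (simp add: inj_words_def)
    have not_3: "[x, y, z] \<notin> inj_words C (Suc ?k)" for x y z
      by (simp add: inj_words_def)
    have "b \<in> ConsT n C (Suc ?k) \<longleftrightarrow> (\<forall>j\<in>C. papp b j \<in> consistent_tensors (C - {j}) ?k) \<and>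
        (\<forall>j1\<in>C. \<forall>j2\<in>C. j1 \<noteq> j2 \<longrightarrow> papp (papp b j1) j2 = papp (papp b j2) j1)"
      using True by (simp add: IH_residual)
    also have "\<dots> \<longleftrightarrow> (\<forall>j\<in>C. papp b j \<in> consistent_tensors (C - {j}) ?k) \<and>
        (\<forall>j1 j2 r. j1 # j2 # r \<in> inj_words C (Suc ?k) \<longrightarrow>
          coeff b (j1 # j2 # r) = coeff b (j2 # j1 # r))"
      using papp_commute_iff_coeff[OF fin True] by simp
    also have "\<dots> \<longleftrightarrow> b \<in> consistent_tensors C (Suc ?k)"
      using consistent_tensors_Suc_iff[OF fin _ True] long not_3 by auto
    finally show ?thesis .
  qed (simp add: consistent_tensors_def)
qed

lemma ConsT_eq_consistent_tensors:
  assumes "C \<subseteq> {1..n}" "2 \<le> i"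
  shows "ConsT n C i = consistent_tensors C i"
proof (cases "i = 2")
  case True
  then show ?thesis
    using ConsT_2_eq[OF assms(1)] by simp
next
  case False
  have ConsT_ge_3: "ConsT n C (Suc (Suc (Suc m))) = consistent_tensors C (Suc (Suc (Suc m)))"
    if "C \<subseteq> {1..n}" for C m
    using that
  proof (induction m arbitrary: C)
    case 0
    then show ?case
      using ConsT_3_eq[of C n] by (simp only: numeral_3_eq_3)
  next
    case (Suc m)
    show ?case
      by (rule ConsT_Suc_eq[OF Suc.prems Suc.IH])
  qed
  obtain m where "i = Suc (Suc (Suc m))"
    using False assms(2) by (intro that[of "i - 3"]) arith
  then show ?thesis
    using ConsT_ge_3[OF assms(1)] by simp
qed

section \<open>Governing tensors\<close>

definition gov_coeff :: "nat set \<Rightarrow> nat \<Rightarrow> nat list \<Rightarrow> bit" where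
  "gov_coeff A x w = of_bool (set w = A \<and> x \<in> last_two w)"

lemma phi_eq_tensor_of:
  assumes "finite C" "A \<subseteq> C" "card A = i" "2 \<le> i"
  shows "phi A x = tensor_of C i (gov_coeff A x)"
proof
  fix \<sigma>s
  have last_two_iff: "x \<in> last_two w \<longleftrightarrow> w ! (card A - 2) = x \<or> w ! (card A - 1) = x"
    if "distinct w" "set w = A" for w
  proof -
    have "length w = card A"
      using that distinct_card by metis
    then show ?thesis
      using last_two_conv_nth[of w] assms(3,4) by auto
  qed
  have words: "{hs. distinct hs \<and> set hs = A \<and> (hs ! (card A - 2) = x \<or> hs ! (card A - 1) = x)} =
      inj_words C i \<inter> {w. set w = A \<and> x \<in> last_two w}"
  proof (intro set_eqI)
    fix w
    show "w \<in> {hs. distinct hs \<and> set hs = A \<and> (hs ! (card A - 2) = x \<or> hs ! (card A - 1) = x)} \<longleftrightarrow>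
        w \<in> inj_words C i \<inter> {w. set w = A \<and> x \<in> last_two w}"
      using last_two_iff[of w] distinct_card[of w] assms(2,3) by (auto simp: inj_words_def)
  qed
  have "phi A x \<sigma>s = (\<Sum>hs\<in>{hs. distinct hs \<and> set hs = A \<and>
      (hs ! (card A - 2) = x \<or> hs ! (card A - 1) = x)}. chi_tensor hs \<sigma>s)"
    using assms(3,4) by (simp add: phi_def)
  also have "\<dots> = (\<Sum>w\<in>inj_words C i \<inter> {w. set w = A \<and> x \<in> last_two w}. chi_tensor w \<sigma>s)"
    unfolding words ..
  also have "\<dots> = tensor_of C i (gov_coeff A x) \<sigma>s"
    by (simp add: tensor_of_def gov_coeff_def finite_inj_words[OF assms(1)])
  finally show "phi A x \<sigma>s = tensor_of C i (gov_coeff A x) \<sigma>s" .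
qed

lemma consistent_gov_coeff: "consistent_coeffs C k (gov_coeff A x)"
proof (rule consistent_coeffsI)
  fix u p q r assume "u @ [p, q, r] \<in> inj_words C k"
  then have "p \<noteq> q" "q \<noteq> r" "p \<noteq> r"
    by (auto simp: inj_words_def)
  moreover have "set (u @ [r, p, q]) = set (u @ [p, q, r])" "set (u @ [q, r, p]) = set (u @ [p, q, r])"
    by auto
  ultimately show "gov_coeff A x (u @ [p, q, r]) + gov_coeff A x (u @ [r, p, q]) +
      gov_coeff A x (u @ [q, r, p]) = 0"
    unfolding gov_coeff_def last_two_snoc3
    by (cases "set (u @ [p, q, r]) = A"; cases "x = p"; cases "x = q"; cases "x = r") auto
qed (simp add: gov_coeff_def)

lemma consistent_coeffs_zero: "consistent_coeffs C k (\<lambda>w. 0)"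
  by (simp add: consistent_coeffs_def)

lemma consistent_coeffs_add:
  assumes c: "consistent_coeffs C k c" and d: "consistent_coeffs C k d"
  shows "consistent_coeffs C k (\<lambda>w. c w + d w)"
proof (rule consistent_coeffsI)
  fix w w' assume "w \<in> inj_words C k" "w' \<in> inj_words C k" "set w = set w'" "last_two w = last_two w'"
  then show "c w + d w = c w' + d w'"
    using consistent_coeffs_last_two[OF c] consistent_coeffs_last_two[OF d] by metis
next
  fix u x y z assume u: "u @ [x, y, z] \<in> inj_words C k"
  have "(c (u @ [x, y, z]) + d (u @ [x, y, z])) + (c (u @ [z, x, y]) + d (u @ [z, x, y])) +
      (c (u @ [y, z, x]) + d (u @ [y, z, x])) =
      (c (u @ [x, y, z]) + c (u @ [z, x, y]) + c (u @ [y, z, x])) +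
      (d (u @ [x, y, z]) + d (u @ [z, x, y]) + d (u @ [y, z, x]))"
    by (simp add: ac_simps)
  then show "c (u @ [x, y, z]) + d (u @ [x, y, z]) + (c (u @ [z, x, y]) + d (u @ [z, x, y])) +
      (c (u @ [y, z, x]) + d (u @ [y, z, x])) = 0"
    using consistent_coeffs_cyclic[OF c u] consistent_coeffs_cyclic[OF d u] by simp
qed

lemma consistent_coeffs_cong:
  assumes c: "consistent_coeffs C k c" and eq: "\<And>w. w \<in> inj_words C k \<Longrightarrow> d w = c w"
  shows "consistent_coeffs C k d"
proof (rule consistent_coeffsI)
  fix w w' assume w: "w \<in> inj_words C k" "w' \<in> inj_words C k" "set w = set w'" "last_two w = last_two w'"
  then show "d w = d w'"
    using consistent_coeffs_last_two[OF c w] eq by simp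
next
  fix u x y z assume u: "u @ [x, y, z] \<in> inj_words C k"
  then show "d (u @ [x, y, z]) + d (u @ [z, x, y]) + d (u @ [y, z, x]) = 0"
    using consistent_coeffs_cyclic[OF c u] eq inj_words_rotate[OF u] by simp
qed

lemma Gov_subset_consistent_tensors:
  assumes "finite C" "2 \<le> i"
  shows "Gov C i \<subseteq> consistent_tensors C i"
  unfolding Gov_def
proof (rule F2span_minimal)
  have "coeff (\<lambda>\<sigma>s. 0) = (\<lambda>w. 0)"
    by (simp add: coeff_def fun_eq_iff)
  then show "(\<lambda>\<sigma>s. 0) \<in> consistent_tensors C i"
    by (simp add: consistent_tensors_def MultiT_def F2span_zero consistent_coeffs_zero)
next
  fix b1 b2 assume "b1 \<in> consistent_tensors C i" "b2 \<in> consistent_tensors C i"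
  moreover have "coeff (\<lambda>\<sigma>s. b1 \<sigma>s + b2 \<sigma>s) = (\<lambda>w. coeff b1 w + coeff b2 w)"
    by (simp add: coeff_add fun_eq_iff)
  ultimately show "(\<lambda>\<sigma>s. b1 \<sigma>s + b2 \<sigma>s) \<in> consistent_tensors C i"
    by (simp add: consistent_tensors_def MultiT_def F2span_add consistent_coeffs_add)
next
  have "phi A x \<in> consistent_tensors C i" if "A \<subseteq> C" "card A = i" for A x
  proof -
    have "consistent_coeffs C i (coeff (tensor_of C i (gov_coeff A x)))"
      by (rule consistent_coeffs_cong[OF consistent_gov_coeff])
        (simp add: coeff_tensor_of[OF assms(1)] inj_words_def)
    then show ?thesis
      using phi_eq_tensor_of[OF assms(1) that assms(2)] tensor_of_in_MultiT[OF assms(1)]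
      by (simp add: consistent_tensors_def)
  qed
  then show "{phi A x |A x. A \<subseteq> C \<and> card A = i \<and> x \<in> A} \<subseteq> consistent_tensors C i"
    by blast
qed

lemma inj_words_move_to_third_last:
  assumes "p @ [y, z] \<in> inj_words C k" "a \<in> set p"
  obtains u where "u @ [a, y, z] \<in> inj_words C k" "set (u @ [a, y, z]) = set (p @ [y, z])"
proof (rule that[of "remove1 a p"])
  have "length p \<noteq> 0"
    using assms(2) by auto
  with assms show "remove1 a p @ [a, y, z] \<in> inj_words C k"
    by (auto simp: inj_words_def length_remove1)
  show "set (remove1 a p @ [a, y, z]) = set (p @ [y, z])"
    using assms by (auto simp: inj_words_def)
qed

lemma consistent_coeffs_sum_last_two:
  assumes c: "consistent_coeffs C i c" and "2 \<le> i"
  obtains h where "\<And>w. w \<in> inj_words C i \<Longrightarrow> c w = (\<Sum>t\<in>last_two w. h (set w) t)"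
proof -
  define rep where "rep A P = (SOME w. w \<in> inj_words C i \<and> set w = A \<and> last_two w = P)" for A P
  have c_rep: "c (rep (set w) (last_two w)) = c w" if "w \<in> inj_words C i" for w
  proof -
    have "rep (set w) (last_two w) \<in> inj_words C i \<and> set (rep (set w) (last_two w)) = set w \<and>
        last_two (rep (set w) (last_two w)) = last_two w"
      unfolding rep_def by (rule someI[of _ w]) (use that in simp)
    then show ?thesis
      using consistent_coeffs_last_two[OF c _ that] by blast
  qed
  define h where "h A t = (if t = Min A then 0 else c (rep A {Min A, t}))" for A t
  show thesis
  proof (rule that)
    fix w assume w: "w \<in> inj_words C i"
    then have "2 \<le> length w"
      using assms(2) by (simp add: inj_words_def)
    then obtain p y z where wp: "w = p @ [y, z]"
      by (rule snoc2_cases)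
    define A where "A = set w"
    define a where "a = Min A"
    have "y \<noteq> z"
      using w by (simp add: wp inj_words_def)
    then have sum_eq: "(\<Sum>t\<in>last_two w. h (set w) t) = h A y + h A z"
      by (simp add: wp A_def)
    have "a \<in> A"
      unfolding a_def A_def by (rule Min_in) (auto simp: wp)
    have cw: "c w = c (rep A {y, z})"
      using c_rep[OF w] by (simp add: A_def wp)
    consider "a = y" | "a = z" | "a \<in> set p"
      using \<open>a \<in> A\<close> by (auto simp: A_def wp)
    then have "c w = h A y + h A z"
    proof cases
      case 1
      then show ?thesis
        using \<open>y \<noteq> z\<close> by (simp add: h_def cw a_def)
    next
      case 2
      then show ?thesis
        using \<open>y \<noteq> z\<close> by (simp add: h_def cw a_def insert_commute)
    next
      case 3
      then obtain u where v: "u @ [a, y, z] \<in> inj_words C i" "set (u @ [a, y, z]) = A"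
        using inj_words_move_to_third_last w by (metis A_def wp)
      then have "a \<noteq> y" "a \<noteq> z"
        by (auto simp: inj_words_def)
      have rot: "u @ [z, a, y] \<in> inj_words C i" "u @ [y, z, a] \<in> inj_words C i"
        using inj_words_rotate[OF v(1)] by simp_all
      have rot_set: "set (u @ [z, a, y]) = A" "set (u @ [y, z, a]) = A"
        using v(2) by auto
      have "c (u @ [a, y, z]) = c w"
        using consistent_coeffs_last_two[OF c v(1) w] v(2) by (simp add: A_def wp)
      moreover have "c (u @ [z, a, y]) = h A y"
        using c_rep[OF rot(1)] rot_set \<open>a \<noteq> y\<close> by (simp add: h_def a_def)
      moreover have "c (u @ [y, z, a]) = h A z"
        using c_rep[OF rot(2)] rot_set \<open>a \<noteq> z\<close> by (simp add: h_def a_def insert_commute)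
      ultimately show ?thesis
        using consistent_coeffs_cyclic[OF c v(1)] by (simp add: bit_add3_eq_0_iff)
    qed
    with sum_eq show "c w = (\<Sum>t\<in>last_two w. h (set w) t)"
      by simp
  qed
qed

lemma tensor_of_lincomb:
  "(\<Sum>p\<in>I. a p * tensor_of C k (d p) \<sigma>s) = tensor_of C k (\<lambda>w. \<Sum>p\<in>I. a p * d p w) \<sigma>s"
  unfolding tensor_of_def sum_distrib_left sum_distrib_right
  by (subst sum.swap) (simp add: mult.assoc)

lemma consistent_tensors_subset_Gov:
  assumes "finite C" "2 \<le> i"
  shows "consistent_tensors C i \<subseteq> Gov C i"
proof
  fix b assume "b \<in> consistent_tensors C i"
  then have b: "b \<in> MultiT C i" "consistent_coeffs C i (coeff b)"
    by (simp_all add: consistent_tensors_def)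
  obtain h where h: "\<And>w. w \<in> inj_words C i \<Longrightarrow> coeff b w = (\<Sum>t\<in>last_two w. h (set w) t)"
    using consistent_coeffs_sum_last_two[OF b(2) assms(2)] by blast
  define I where "I = {(A, x). A \<subseteq> C \<and> card A = i \<and> x \<in> A}"
  have "finite I"
    by (rule finite_subset[of _ "Pow C \<times> C"]) (use assms(1) in \<open>auto simp: I_def\<close>)
  have coeff_b: "coeff b w = (\<Sum>p\<in>I. h (fst p) (snd p) * gov_coeff (fst p) (snd p) w)"
    if w: "w \<in> inj_words C i" for w
  proof -
    have "card (set w) = i" "set w \<subseteq> C"
      using w by (auto simp: inj_words_def distinct_card)
    have "I \<inter> {p. set w = fst p \<and> snd p \<in> last_two w} = Pair (set w) ` last_two w"
    proof (intro set_eqI iffI)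
      fix p assume "p \<in> I \<inter> {p. set w = fst p \<and> snd p \<in> last_two w}"
      then show "p \<in> Pair (set w) ` last_two w"
        by (cases p) auto
    next
      fix p assume "p \<in> Pair (set w) ` last_two w"
      then show "p \<in> I \<inter> {p. set w = fst p \<and> snd p \<in> last_two w}"
        using \<open>card (set w) = i\<close> \<open>set w \<subseteq> C\<close> last_two_subset[of w] by (auto simp: I_def)
    qed
    then have "(\<Sum>p\<in>I. h (fst p) (snd p) * gov_coeff (fst p) (snd p) w) =
        (\<Sum>p\<in>Pair (set w) ` last_two w. h (fst p) (snd p))"
      using \<open>finite I\<close> by (simp add: gov_coeff_def)
    also have "\<dots> = (\<Sum>t\<in>last_two w. h (set w) t)"
      by (subst sum.reindex) (auto simp: inj_on_def)
    finally show ?thesis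
      using h[OF w] by simp
  qed
  have "b = (\<lambda>\<sigma>s. \<Sum>p\<in>I. h (fst p) (snd p) * phi (fst p) (snd p) \<sigma>s)"
  proof
    fix \<sigma>s
    have "b \<sigma>s = tensor_of C i (\<lambda>w. \<Sum>p\<in>I. h (fst p) (snd p) * gov_coeff (fst p) (snd p) w) \<sigma>s"
      using tensor_of_coeff[OF assms(1) b(1)] tensor_of_cong[of C i "coeff b", OF coeff_b] by simp
    also have "\<dots> = (\<Sum>p\<in>I. h (fst p) (snd p) * tensor_of C i (gov_coeff (fst p) (snd p)) \<sigma>s)"
      by (rule tensor_of_lincomb[symmetric])
    also have "\<dots> = (\<Sum>p\<in>I. h (fst p) (snd p) * phi (fst p) (snd p) \<sigma>s)"
      by (rule sum.cong) (auto simp: I_def phi_eq_tensor_of[OF assms(1) _ _ assms(2)])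
    finally show "b \<sigma>s = (\<Sum>p\<in>I. h (fst p) (snd p) * phi (fst p) (snd p) \<sigma>s)" .
  qed
  moreover have "(\<lambda>\<sigma>s. \<Sum>p\<in>I. h (fst p) (snd p) * phi (fst p) (snd p) \<sigma>s) \<in> Gov C i"
    unfolding Gov_def
  proof (rule F2span_sum[OF \<open>finite I\<close>], rule F2span_base)
    fix p assume "p \<in> I"
    then obtain A x where "p = (A, x)" "A \<subseteq> C" "card A = i" "x \<in> A"
      by (auto simp: I_def)
    then show "phi (fst p) (snd p) \<in> {phi A x |A x. A \<subseteq> C \<and> card A = i \<and> x \<in> A}"
      by auto
  qed
  ultimately show "b \<in> Gov C i"
    by simp
qed

lemma ConsT_1_eq_Gov: "ConsT n C 1 = Gov C 1"
proof -
  have "{phi A x |A x. A \<subseteq> C \<and> card A = 1 \<and> x \<in> A} = {chi_tensor [x] |x. x \<in> C}"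
  proof (intro set_eqI iffI)
    fix t assume "t \<in> {phi A x |A x. A \<subseteq> C \<and> card A = 1 \<and> x \<in> A}"
    then obtain A x where A: "A \<subseteq> C" "card A = 1" "x \<in> A" "t = phi A x"
      by blast
    then have "A = {x}"
      by (metis card_1_singletonE singletonD)
    with A show "t \<in> {chi_tensor [x] |x. x \<in> C}"
      by (auto simp: phi_def)
  next
    fix t assume "t \<in> {chi_tensor [x] |x. x \<in> C}"
    then obtain x where "x \<in> C" "t = phi {x} x"
      by (auto simp: phi_def)
    moreover have "card {x} = 1"
      by simp
    ultimately show "t \<in> {phi A x |A x. A \<subseteq> C \<and> card A = 1 \<and> x \<in> A}"
      by blast
  qed
  then show ?thesis
    using ConsT.simps(2)[of n C] by (simp add: Gov_def)
qed

theorem proposition2p4: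
  fixes n i :: nat and B :: "nat set"
  assumes "n \<ge> 1" and "i \<ge> 1" and "B \<subseteq> {1..n}"
  shows "ConsT n B i = Gov B i"
proof (cases "i = 1")
  case True
  then show ?thesis
    using ConsT_1_eq_Gov by simp
next
  case False
  then have "2 \<le> i"
    using assms(2) by simp
  have "finite B"
    using assms(3) finite_subset by blast
  have "ConsT n B i = consistent_tensors B i"
    using ConsT_eq_consistent_tensors[OF assms(3) \<open>2 \<le> i\<close>] .
  also have "\<dots> = Gov B i"
    using \<open>finite B\<close> \<open>2 \<le> i\<close>
    by (intro equalityI consistent_tensors_subset_Gov Gov_subset_consistent_tensors)
  finally show ?thesis .
qed

end
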